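(* $$\sum_{n=1}^\infty \frac{H_n \binom{2n}{n}}{n\, 2^{2n}} = \frac{\pi^2}{3}.$$
   Context: $H_n=\sum_{k=1}^n \frac{1}{k}$ denotes the $n$-th harmonic number and $\binom{2n}{n}$ the central binomial coefficient. *)

theory Defs
  imports "HOL-Analysis.Analysis"
begin

end

(*
  Write c n = (2n choose n) / 4^n.  The binomial series gives sum c n x^n = 1 / sqrt (1 - x).
  Integrating the derived series sum c (n+1) s^n termwise over [y, 1] (legitimate because all
  terms are nonnegative; it also avoids an Abelian limit at the boundary point 1) gives
  sum c (n+1) / (n+1) * (1 - y^(n+1)) = 2 ln (1 + sqrt (1 - y)).
  Since H n is the integral over (0, 1) of 2 (1 - (1 - u^2)^n) / u, one more exchange of sum
  and integral, with y = 1 - u^2, turns the series into 4 times the integral of ln (1 + u) / u,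
  which is pi^2/6 - pi^2/12 by expanding -ln (1 - u) / u and -ln (1 - u^2) / u.
*)

theory Submission
  imports Defs
begin

lemma nonneg_series_has_integral_iff:
  fixes t :: "nat \<Rightarrow> 'a::euclidean_space \<Rightarrow> real"
  assumes int: "\<And>m. (t m has_integral c m) S"
    and nonneg: "\<And>m x. x \<in> S \<Longrightarrow> 0 \<le> t m x"
    and sums: "\<And>x. x \<in> S \<Longrightarrow> (\<lambda>m. t m x) sums g x"
  shows "(g has_integral L) S \<longleftrightarrow> c sums L"
proof -
  define T where "T k x = (\<Sum>m<k. t m x)" for k x
  have T_int: "(T k has_integral (\<Sum>m<k. c m)) S" for k
    unfolding T_def by (intro has_integral_sum int) simp
  then have T_integrable: "T k integrable_on S" and T_integral: "integral S (T k) = (\<Sum>m<k. c m)" for k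
    by (auto simp: integral_unique)
  have T_mono: "T k x \<le> T (Suc k) x" if "x \<in> S" for k x
    using nonneg[OF that] by (simp add: T_def)
  have T_lim: "(\<lambda>k. T k x) \<longlonglongrightarrow> g x" if "x \<in> S" for x
    using sums[OF that] by (simp add: T_def sums_def)
  show ?thesis
  proof
    assume g: "(g has_integral L) S"
    have "T k x \<le> g x" if "x \<in> S" for k x
      using sums[OF that] nonneg[OF that] unfolding T_def sums_iff
      by (metis finite_lessThan sum_le_suminf)
    then have "range (\<lambda>k. integral S (T k)) \<subseteq> {0..L}"
      using has_integral_nonneg[OF int] nonneg has_integral_le[OF T_int g]
      by (auto simp: T_integral intro!: sum_nonneg)
    then have "bounded (range (\<lambda>k. integral S (T k)))"
      by (rule bounded_subset[OF bounded_closed_interval])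
    with monotone_convergence_increasing[OF T_integrable T_mono T_lim]
    have "(\<lambda>k. \<Sum>m<k. c m) \<longlonglongrightarrow> integral S g"
      by (simp add: T_integral)
    with g show "c sums L"
      by (simp add: sums_def integral_unique)
  next
    assume "c sums L"
    then show "(g has_integral L) S"
      using has_integral_monotone_convergence_increasing[OF T_int T_mono T_lim]
      by (simp add: sums_def)
  qed
qed

lemma has_integral_power_real:
  fixes a b :: real
  assumes "a \<le> b"
  shows "((\<lambda>x. x ^ n) has_integral (b ^ Suc n - a ^ Suc n) / Suc n) {a..b}"
proof -
  have "((\<lambda>x. x ^ Suc n / Suc n) has_real_derivative x ^ n) (at x)" for x :: real
    using DERIV_cdivide[OF DERIV_pow[of "Suc n" x], of "Suc n"] by simp
  then have "((\<lambda>x. x ^ n) has_integral (b ^ Suc n / Suc n - a ^ Suc n / Suc n)) {a..b}"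
    by (intro fundamental_theorem_of_calculus[OF assms])
       (simp add: has_real_derivative_iff_has_vector_derivative[symmetric] has_field_derivative_at_within)
  then show ?thesis
    by (simp add: diff_divide_distrib)
qed

definition scaled_central_binomial :: "nat \<Rightarrow> real" where
  "scaled_central_binomial n = real ((2 * n) choose n) / 4 ^ n"

lemma scaled_central_binomial_nonneg: "scaled_central_binomial n \<ge> 0"
  by (simp add: scaled_central_binomial_def)

lemma scaled_central_binomial_eq_gbinomial:
  "scaled_central_binomial n = (-1) ^ n * ((-1/2) gchoose n)"
proof -
  have "real ((2 * n) choose n) = fact (2 * n) / (fact n * fact n)"
    by (simp add: binomial_fact)
  also have "\<dots> = 4 ^ n * pochhammer (1/2) n / fact n"
    by (simp add: fact_double power_mult)
  finally have "scaled_central_binomial n = pochhammer (1/2) n / fact n"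
    by (simp add: scaled_central_binomial_def)
  also have "\<dots> = (-1) ^ n * ((-1/2) gchoose n)"
    by (simp add: gbinomial_pochhammer flip: power_mult_distrib)
  finally show ?thesis .
qed

lemma scaled_central_binomial_sums:
  assumes "\<bar>x\<bar> < 1"
  shows "(\<lambda>n. scaled_central_binomial n * x ^ n) sums (1 / sqrt (1 - x))"
proof -
  have "(\<lambda>n. ((-1/2) gchoose n) * (-x) ^ n) sums (1 + -x) powr (-1/2)"
    using assms by (intro gen_binomial_real) simp
  moreover have "((-1/2) gchoose n) * (-x) ^ n = scaled_central_binomial n * x ^ n" for n
    by (simp add: scaled_central_binomial_eq_gbinomial power_minus[of x])
  moreover have "(1 + -x) powr (-1/2) = 1 / sqrt (1 - x)"
    using assms by (simp add: powr_minus_divide powr_half_sqrt)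
  ultimately show ?thesis by simp
qed

lemma scaled_central_binomial_shifted_sums:
  assumes "0 < s" "s < 1"
  shows "(\<lambda>n. scaled_central_binomial (Suc n) * s ^ n) sums ((1 / sqrt (1 - s) - 1) / s)"
proof -
  have "(\<lambda>n. scaled_central_binomial (Suc n) * s ^ Suc n) sums (1 / sqrt (1 - s) - 1)"
    using scaled_central_binomial_sums[of s] assms
    by (subst sums_Suc_iff) (simp add: scaled_central_binomial_def)
  from sums_divide[OF this, of s] show ?thesis
    using assms by simp
qed

lemma has_integral_log_one_plus_sqrt:
  assumes "0 \<le> y" "y \<le> 1"
  shows "((\<lambda>s. (1 / sqrt (1 - s) - 1) / s) has_integral 2 * ln (1 + sqrt (1 - y))) {y..1}"
proof -
  define F where "F s = - 2 * ln (1 + sqrt (1 - s))" for s :: real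
  have "(F has_real_derivative (1 / sqrt (1 - s) - 1) / s) (at s)" if "s \<in> {y<..<1}" for s
  proof -
    define w where "w = sqrt (1 - s)"
    have w: "0 < w" "w < 1" "s = (1 - w) * (1 + w)"
      using that assms by (auto simp: w_def algebra_simps)
    have "(F has_real_derivative - 2 * (1 / (1 + w) * (inverse w / 2 * (0 - 1)))) (at s)"
      unfolding F_def w_def using that by (auto intro!: derivative_eq_intros add_pos_nonneg)
    moreover have "- 2 * (1 / (1 + w) * (inverse w / 2 * (0 - 1))) = (1 / w - 1) / s"
      unfolding w(3) using w(1,2) by (simp add: divide_simps)
    ultimately show ?thesis by (simp add: w_def)
  qed
  moreover have "continuous_on {y..1} F"
    unfolding F_def by (intro continuous_intros) (auto simp: add_nonneg_eq_0_iff)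
  ultimately show ?thesis
    using fundamental_theorem_of_calculus_interior[OF assms(2), of F]
    by (simp add: F_def has_real_derivative_iff_has_vector_derivative)
qed

lemma scaled_central_binomial_log_sums:
  assumes "0 \<le> y" "y \<le> 1"
  shows "(\<lambda>n. scaled_central_binomial (Suc n) / Suc n * (1 - y ^ Suc n)) sums (2 * ln (1 + sqrt (1 - y)))"
proof -
  define t where "t n s = scaled_central_binomial (Suc n) * s ^ n" for n and s :: real
  have t_integral: "(t n has_integral scaled_central_binomial (Suc n) / Suc n * (1 - y ^ Suc n)) {y<..<1}" for n
    using has_integral_mult_right[OF has_integral_power_real[OF assms(2), of n]]
    by (simp add: t_def[abs_def] has_integral_Icc_iff_Ioo)
  have t_nonneg: "0 \<le> t n s" if "s \<in> {y<..<1}" for n s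
    using that assms scaled_central_binomial_nonneg[of "Suc n"] by (simp add: t_def)
  have t_sums: "(\<lambda>n. t n s) sums ((1 / sqrt (1 - s) - 1) / s)" if "s \<in> {y<..<1}" for s
    using that assms unfolding t_def by (intro scaled_central_binomial_shifted_sums) auto
  have "((\<lambda>s. (1 / sqrt (1 - s) - 1) / s) has_integral 2 * ln (1 + sqrt (1 - y))) {y<..<1}"
    using has_integral_log_one_plus_sqrt[OF assms] by (simp add: has_integral_Icc_iff_Ioo)
  then show ?thesis
    using nonneg_series_has_integral_iff[OF t_integral t_nonneg t_sums] by blast
qed

lemma has_integral_harm:
  "((\<lambda>u::real. 2 * (1 - (1 - u\<^sup>2) ^ n) / u) has_integral harm n) {0<..<1}"
proof -
  have "((\<lambda>u. 2 * u * (1 - u\<^sup>2) ^ j) has_integral 1 / Suc j) {0..1}" for j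
  proof -
    define F where "F u = - ((1 - u\<^sup>2) ^ Suc j) / Suc j" for u :: real
    have "(F has_real_derivative 2 * u * (1 - u\<^sup>2) ^ j) (at u)" for u
    proof -
      have "((\<lambda>u::real. 1 - u\<^sup>2) has_real_derivative - (2 * u)) (at u)"
        using DERIV_diff[OF DERIV_const DERIV_pow[of 2 u]] by simp
      from DERIV_cdivide[OF DERIV_minus[OF DERIV_power[OF this, of "Suc j"]], of "Suc j"]
      show ?thesis
        unfolding F_def by (simp del: of_nat_Suc)
    qed
    then have "((\<lambda>u. 2 * u * (1 - u\<^sup>2) ^ j) has_integral F 1 - F 0) {0..1}"
      by (intro fundamental_theorem_of_calculus)
         (simp_all add: has_real_derivative_iff_has_vector_derivative[symmetric] has_field_derivative_at_within)
    then show ?thesis by (simp add: F_def)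
  qed
  then have "((\<lambda>u::real. \<Sum>j<n. 2 * u * (1 - u\<^sup>2) ^ j) has_integral (\<Sum>j<n. 1 / Suc j)) {0<..<1}"
    by (intro has_integral_sum) (simp_all add: has_integral_Icc_iff_Ioo[symmetric])
  then have harm_integral: "((\<lambda>u::real. \<Sum>j<n. 2 * u * (1 - u\<^sup>2) ^ j) has_integral harm n) {0<..<1}"
    by (simp add: harm_altdef inverse_eq_divide)
  have geometric_sum: "(\<Sum>j<n. 2 * u * (1 - u\<^sup>2) ^ j) = 2 * (1 - (1 - u\<^sup>2) ^ n) / u" if "u \<in> {0<..<1}" for u :: real
  proof -
    have "1 - (1 - u\<^sup>2) ^ n = u\<^sup>2 * (\<Sum>j<n. (1 - u\<^sup>2) ^ j)"
      using one_diff_power_eq[of "1 - u\<^sup>2" n] by simp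
    then have "2 * (1 - (1 - u\<^sup>2) ^ n) / u = 2 * u * (\<Sum>j<n. (1 - u\<^sup>2) ^ j)"
      using that by (simp add: power2_eq_square)
    then show ?thesis
      by (simp add: sum_distrib_left)
  qed
  from has_integral_eq[OF geometric_sum harm_integral] show ?thesis .
qed

lemma has_integral_neg_ln_one_minus_power_div:
  assumes "k > 0"
  shows "((\<lambda>u. - ln (1 - u ^ k) / u) has_integral pi\<^sup>2 / (6 * k)) {0<..<1}"
proof -
  define t where "t m u = u ^ (k * m + k - 1) / (real m + 1)" for m u
  have exponent: "Suc (k * m + k - 1) = k * Suc m" for m
    using assms by simp
  have c_sums: "(\<lambda>m. 1 / k * (1 / (real m + 1)\<^sup>2)) sums (1 / k * (pi\<^sup>2 / 6))"
    using sums_mult[OF inverse_squares_sums, of "1 / k"] by (simp add: ac_simps)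
  have t_integral: "(t m has_integral 1 / k * (1 / (real m + 1)\<^sup>2)) {0<..<1}" for m
  proof -
    have "((\<lambda>u. u ^ (k * m + k - 1)) has_integral 1 / (k * (real m + 1))) {0..1}"
      using has_integral_power_real[of 0 1 "k * m + k - 1"] assms
      unfolding exponent by (simp add: power_0_left algebra_simps)
    then have "(t m has_integral 1 / (k * (real m + 1)) / (real m + 1)) {0..1}"
      unfolding t_def by (rule has_integral_divide)
    then show ?thesis
      by (simp add: has_integral_Icc_iff_Ioo power2_eq_square mult.assoc)
  qed
  have t_sums: "(\<lambda>m. t m u) sums (- ln (1 - u ^ k) / u)" if "u \<in> {0<..<1}" for u
  proof -
    have "\<bar>- (u ^ k)\<bar> < 1" using that assms by (simp add: power_less_one_iff)
    from ln_series'[OF this] have "(\<lambda>m. - ((u ^ k) ^ m) / m) sums ln (1 - u ^ k)"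
      by simp
    from sums_minus[OF this] have "(\<lambda>m. (u ^ k) ^ m / m) sums - ln (1 - u ^ k)"
      by simp
    then have "(\<lambda>m. (u ^ k) ^ Suc m / Suc m) sums - ln (1 - u ^ k)"
      by (subst sums_Suc_iff) simp
    moreover have "(u ^ k) ^ Suc m / Suc m / u = t m u" for m
    proof -
      have "(u ^ k) ^ Suc m = u * u ^ (k * m + k - 1)"
        by (metis exponent power_Suc power_mult)
      then show ?thesis using that by (simp add: t_def)
    qed
    ultimately show ?thesis
      using sums_divide[of _ _ u] by fastforce
  qed
  have t_nonneg: "0 \<le> t m u" if "u \<in> {0<..<1}" for m u
    using that by (simp add: t_def)
  from c_sums have "((\<lambda>u. - ln (1 - u ^ k) / u) has_integral 1 / k * (pi\<^sup>2 / 6)) {0<..<1}"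
    using nonneg_series_has_integral_iff[OF t_integral t_nonneg t_sums] by blast
  then show ?thesis
    by (simp add: mult.commute)
qed

lemma has_integral_ln_one_plus_div:
  "((\<lambda>u. ln (1 + u) / u) has_integral pi\<^sup>2 / 12) {0<..<1}"
proof -
  have difference: "- ln (1 - u ^ 1) / u - - ln (1 - u ^ 2) / u = ln (1 + u) / u" if "u \<in> {0<..<1}" for u :: real
  proof -
    have "ln ((1 - u) * (1 + u)) = ln (1 - u) + ln (1 + u)"
      using that by (simp add: ln_mult)
    moreover have "(1 - u) * (1 + u) = 1 - u ^ 2"
      by (simp add: power2_eq_square algebra_simps)
    ultimately show ?thesis by (simp add: diff_divide_distrib)
  qed
  have "((\<lambda>u. - ln (1 - u ^ 1) / u - - ln (1 - u ^ 2) / u) has_integral pi\<^sup>2 / 12) {0<..<1}"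
    using has_integral_diff[OF has_integral_neg_ln_one_minus_power_div[of 1]
                               has_integral_neg_ln_one_minus_power_div[of 2]] by simp
  from has_integral_eq[OF difference this] show ?thesis .
qed

lemma scaled_central_binomial_harm_sums:
  "(\<lambda>n. scaled_central_binomial (Suc n) / Suc n * harm (Suc n)) sums (pi\<^sup>2 / 3)"
proof -
  define t where "t n u = scaled_central_binomial (Suc n) / Suc n * (2 * (1 - (1 - u\<^sup>2) ^ Suc n) / u)" for n u
  have t_integral: "(t n has_integral scaled_central_binomial (Suc n) / Suc n * harm (Suc n)) {0<..<1}" for n
    unfolding t_def by (intro has_integral_mult_right has_integral_harm)
  have unit_interval: "0 \<le> 1 - u\<^sup>2" "1 - u\<^sup>2 \<le> 1" if "u \<in> {0<..<1}" for u :: real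
    using that by (auto intro: power_le_one)
  have t_nonneg: "0 \<le> t n u" if "u \<in> {0<..<1}" for n u
    using that power_le_one[OF unit_interval[OF that], of "Suc n"] scaled_central_binomial_nonneg[of "Suc n"]
    by (auto simp: t_def simp del: power_Suc)
  have t_sums: "(\<lambda>n. t n u) sums (4 * (ln (1 + u) / u))" if "u \<in> {0<..<1}" for u
  proof -
    have "sqrt (1 - (1 - u\<^sup>2)) = u"
      using that by simp
    moreover have "2 / u * (c * d) = c * (2 * d / u)" "2 / u * (2 * ln (1 + u)) = 4 * (ln (1 + u) / u)"
      for c d :: real
      by simp_all
    ultimately show ?thesis
      using sums_mult[OF scaled_central_binomial_log_sums[OF unit_interval[OF that]], of "2 / u"]
      by (simp only: t_def)
  qed
  have "((\<lambda>u. 4 * (ln (1 + u) / u)) has_integral 4 * (pi\<^sup>2 / 12)) {0<..<1}"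
    by (intro has_integral_mult_right has_integral_ln_one_plus_div)
  then show ?thesis
    using nonneg_series_has_integral_iff[OF t_integral t_nonneg t_sums] by simp
qed

theorem mainTheorem1:
  shows "(\<lambda>n. harm (Suc n) * real ((2 * Suc n) choose (Suc n)) / (real (Suc n) * 2 ^ (2 * Suc n)))
           sums (pi\<^sup>2 / 3)"
proof -
  have "harm (Suc n) * real ((2 * Suc n) choose (Suc n)) / (real (Suc n) * 2 ^ (2 * Suc n))
      = scaled_central_binomial (Suc n) / Suc n * harm (Suc n)" for n
    unfolding power_mult by (simp add: scaled_central_binomial_def ac_simps del: binomial_Suc_Suc)
  with scaled_central_binomial_harm_sums show ?thesis
    by simp
qed

end
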